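(* Let $S$ be a semigroup and $T$ a subsemigroup of $S$ such that $S\setminus T$ is finite, and suppose that $T$ is finitely right equated. Then $S$ is finitely right equated if and only if $\mathbf{r}_S(a)$ is finitely generated as a right congruence on $S$ for each $a\in S\setminus T$.
   Context: For a semigroup $S$ and $a\in S$, $\mathbf{r}_S(a)=\{(s,t)\in S\times S\mid as=at\}$ (a right congruence); $S$ is finitely right equated if each $\mathbf{r}_S(a)$ is finitely generated as a right congruence, i.e. is the smallest right congruence containing some finite set. *)

theory Defs
  imports Main
begin

definition semigroup_on :: "'a set \<Rightarrow> ('a \<Rightarrow> 'a \<Rightarrow> 'a) \<Rightarrow> bool" where
  "semigroup_on S f \<longleftrightarrow> (\<forall>x\<in>S. \<forall>y\<in>S. f x y \<in> S) \<and>
     (\<forall>x\<in>S. \<forall>y\<in>S. \<forall>z\<in>S. f (f x y) z = f x (f y z))"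

definition subsemigroup :: "'a set \<Rightarrow> 'a set \<Rightarrow> ('a \<Rightarrow> 'a \<Rightarrow> 'a) \<Rightarrow> bool" where
  "subsemigroup T S f \<longleftrightarrow> T \<subseteq> S \<and> T \<noteq> {} \<and> (\<forall>x\<in>T. \<forall>y\<in>T. f x y \<in> T)"

definition right_congruence :: "'a set \<Rightarrow> ('a \<Rightarrow> 'a \<Rightarrow> 'a) \<Rightarrow> 'a rel \<Rightarrow> bool" where
  "right_congruence S f \<rho> \<longleftrightarrow> equiv S \<rho> \<and>
     (\<forall>s t u. (s, t) \<in> \<rho> \<longrightarrow> u \<in> S \<longrightarrow> (f s u, f t u) \<in> \<rho>)"

definition right_congruence_gen :: "'a set \<Rightarrow> ('a \<Rightarrow> 'a \<Rightarrow> 'a) \<Rightarrow> 'a rel \<Rightarrow> 'a rel" where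
  "right_congruence_gen S f X = \<Inter>{\<rho>. right_congruence S f \<rho> \<and> X \<subseteq> \<rho>}"

definition fg_right_congruence :: "'a set \<Rightarrow> ('a \<Rightarrow> 'a \<Rightarrow> 'a) \<Rightarrow> 'a rel \<Rightarrow> bool" where
  "fg_right_congruence S f \<rho> \<longleftrightarrow>
     (\<exists>X. finite X \<and> X \<subseteq> S \<times> S \<and> \<rho> = right_congruence_gen S f X)"

definition r_annih :: "'a set \<Rightarrow> ('a \<Rightarrow> 'a \<Rightarrow> 'a) \<Rightarrow> 'a \<Rightarrow> 'a rel" where
  "r_annih S f a = {(s, t). s \<in> S \<and> t \<in> S \<and> f a s = f a t}"

definition finitely_right_equated :: "'a set \<Rightarrow> ('a \<Rightarrow> 'a \<Rightarrow> 'a) \<Rightarrow> bool" where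
  "finitely_right_equated S f \<longleftrightarrow> (\<forall>a\<in>S. fg_right_congruence S f (r_annih S f a))"

end

theory Submission
  imports Defs
begin

text \<open>For a \<in> T, choose for every u \<in> S an element c u with a c u = a u, lying in T whenever
  a u \<in> a T. Any right congruence containing r_T(a) and the pairs (u, c u) for u \<in> S - T
  contains every pair (s, t) of r_S(a) with s \<in> T or t \<in> T, since then both c s and c t lie
  in T. The remaining pairs of r_S(a) lie in the finite set (S - T) \<times> (S - T). Hence a finite
  generating set of r_T(a), extended by these finitely many pairs, generates r_S(a).\<close>

lemma right_congruence_sym:
  "right_congruence S f \<rho> \<Longrightarrow> (x, y) \<in> \<rho> \<Longrightarrow> (y, x) \<in> \<rho>"
  unfolding right_congruence_def equiv_def sym_def by blast

lemma right_congruence_trans: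
  "right_congruence S f \<rho> \<Longrightarrow> (x, y) \<in> \<rho> \<Longrightarrow> (y, z) \<in> \<rho> \<Longrightarrow> (x, z) \<in> \<rho>"
  unfolding right_congruence_def equiv_def trans_def by blast

lemma right_congruence_restrict:
  assumes "right_congruence S f \<rho>" and "subsemigroup T S f"
  shows "right_congruence T f (\<rho> \<inter> T \<times> T)"
proof -
  have "T \<subseteq> S" and closed: "\<And>x y. x \<in> T \<Longrightarrow> y \<in> T \<Longrightarrow> f x y \<in> T"
    using assms(2) unfolding subsemigroup_def by auto
  have "equiv S \<rho>"
    and compat: "\<And>s t u. (s, t) \<in> \<rho> \<Longrightarrow> u \<in> S \<Longrightarrow> (f s u, f t u) \<in> \<rho>"
    using assms(1) unfolding right_congruence_def by auto
  have "equiv T (\<rho> \<inter> T \<times> T)"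
    using \<open>equiv S \<rho>\<close> \<open>T \<subseteq> S\<close> unfolding equiv_def refl_on_def sym_def trans_def by blast
  moreover have "(f s u, f t u) \<in> \<rho> \<inter> T \<times> T" if "(s, t) \<in> \<rho> \<inter> T \<times> T" "u \<in> T" for s t u
    using that compat closed \<open>T \<subseteq> S\<close> by blast
  ultimately show ?thesis unfolding right_congruence_def by blast
qed

lemma right_congruence_r_annih:
  assumes "semigroup_on S f" and "a \<in> S"
  shows "right_congruence S f (r_annih S f a)"
  unfolding right_congruence_def equiv_def refl_on_def sym_def trans_def
proof (intro conjI allI impI)
  fix s t u assume "(s, t) \<in> r_annih S f a" and "u \<in> S"
  then show "(f s u, f t u) \<in> r_annih S f a"
    using assms unfolding semigroup_on_def r_annih_def by (auto) (metis)
qed (auto simp: r_annih_def)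

lemma right_congruence_gen_subset: "X \<subseteq> right_congruence_gen S f X"
  unfolding right_congruence_gen_def by blast

lemma right_congruence_gen_least:
  "right_congruence S f \<rho> \<Longrightarrow> X \<subseteq> \<rho> \<Longrightarrow> right_congruence_gen S f X \<subseteq> \<rho>"
  unfolding right_congruence_gen_def by blast

lemma right_congruence_gen_eqI:
  assumes "right_congruence S f R" and "X \<subseteq> R"
    and "\<And>\<rho>. right_congruence S f \<rho> \<Longrightarrow> X \<subseteq> \<rho> \<Longrightarrow> R \<subseteq> \<rho>"
  shows "right_congruence_gen S f X = R"
  using assms unfolding right_congruence_gen_def by blast

lemma r_annih_mono: "T \<subseteq> S \<Longrightarrow> r_annih T f a \<subseteq> r_annih S f a"
  unfolding r_annih_def by auto

lemma r_annih_representatives_exist: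
  assumes "T \<subseteq> S"
  obtains c where "\<And>u. u \<in> S \<Longrightarrow> c u \<in> S"
    and "\<And>u. f a (c u) = f a u"
    and "\<And>u t. t \<in> T \<Longrightarrow> f a u = f a t \<Longrightarrow> c u \<in> T"
proof
  define c where "c u = (if \<exists>t\<in>T. f a u = f a t then SOME t. t \<in> T \<and> f a u = f a t else u)"
    for u
  have chosen: "c u \<in> T \<and> f a u = f a (c u)" if "\<exists>t\<in>T. f a u = f a t" for u
    using someI_ex[of "\<lambda>t. t \<in> T \<and> f a u = f a t"] that unfolding c_def by auto
  show "c u \<in> S" if "u \<in> S" for u
    using chosen[of u] that assms unfolding c_def by auto
  show "f a (c u) = f a u" for u
    using chosen[of u] unfolding c_def by auto
  show "c u \<in> T" if "t \<in> T" and "f a u = f a t" for u t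
    using chosen[of u] that by auto
qed

lemma r_annih_subset_by_representatives:
  assumes rc: "right_congruence S f \<rho>" and "T \<subseteq> S"
    and annih_T: "r_annih T f a \<subseteq> \<rho>"
    and c_S: "\<And>u. u \<in> S \<Longrightarrow> c u \<in> S"
    and c_annih: "\<And>u. f a (c u) = f a u"
    and c_T: "\<And>u t. t \<in> T \<Longrightarrow> f a u = f a t \<Longrightarrow> c u \<in> T"
    and c_rel: "\<And>u. u \<in> S - T \<Longrightarrow> (u, c u) \<in> \<rho>"
    and outside: "r_annih S f a \<inter> (S - T) \<times> (S - T) \<subseteq> \<rho>"
  shows "r_annih S f a \<subseteq> \<rho>"
proof
  fix p assume p: "p \<in> r_annih S f a"
  then obtain s t where st: "p = (s, t)" "s \<in> S" "t \<in> S" "f a s = f a t"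
    unfolding r_annih_def by auto
  have to_rep: "(u, c u) \<in> \<rho>" if "u \<in> S" "c u \<in> T" for u
  proof (cases "u \<in> T")
    case True
    then have "(u, c u) \<in> r_annih T f a"
      using that c_annih unfolding r_annih_def by auto
    then show ?thesis using annih_T by blast
  qed (use that c_rel in auto)
  show "p \<in> \<rho>"
  proof (cases "s \<in> T \<or> t \<in> T")
    case True
    then have reps: "c s \<in> T" "c t \<in> T"
      using c_T[of s t] c_T[of t s] c_T[of s s] c_T[of t t] st(4) by auto
    then have "(c s, c t) \<in> \<rho>"
      using annih_T c_annih st(4) unfolding r_annih_def by auto
    then show ?thesis
      using to_rep[OF st(2) reps(1)] to_rep[OF st(3) reps(2)] st(1)
        right_congruence_sym[OF rc, of t "c t"] right_congruence_trans[OF rc] by blast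
  next
    case False
    then show ?thesis using p st outside by auto
  qed
qed

lemma fg_r_annih_of_subsemigroup:
  assumes sg: "semigroup_on S f" and sub: "subsemigroup T S f"
    and fin: "finite (S - T)"
    and fg_T: "fg_right_congruence T f (r_annih T f a)"
    and "a \<in> T"
  shows "fg_right_congruence S f (r_annih S f a)"
proof -
  have TS: "T \<subseteq> S" using sub unfolding subsemigroup_def by blast
  obtain X where X: "finite X" "X \<subseteq> T \<times> T" "r_annih T f a = right_congruence_gen T f X"
    using fg_T unfolding fg_right_congruence_def by blast
  obtain c where c_S: "\<And>u. u \<in> S \<Longrightarrow> c u \<in> S" and c_annih: "\<And>u. f a (c u) = f a u"
    and c_T: "\<And>u t. t \<in> T \<Longrightarrow> f a u = f a t \<Longrightarrow> c u \<in> T"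
    using r_annih_representatives_exist[OF TS, where a = a and f = f] by blast
  define Y where
    "Y = X \<union> (\<lambda>u. (u, c u)) ` (S - T) \<union> (r_annih S f a \<inter> (S - T) \<times> (S - T))"
  have "finite Y"
    unfolding Y_def using X(1) fin by (auto intro: finite_subset[of _ "(S - T) \<times> (S - T)"])
  moreover have "Y \<subseteq> S \<times> S"
    unfolding Y_def using X(2) TS c_S unfolding r_annih_def by auto
  moreover have X_annih: "X \<subseteq> r_annih T f a"
    using X(3) right_congruence_gen_subset[of X T f] by simp
  have "right_congruence_gen S f Y = r_annih S f a"
  proof (rule right_congruence_gen_eqI)
    show "right_congruence S f (r_annih S f a)"
      using right_congruence_r_annih[OF sg] \<open>a \<in> T\<close> TS by blast
    show "Y \<subseteq> r_annih S f a"
      unfolding Y_def using X_annih r_annih_mono[OF TS, of f a] c_S c_annih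
      unfolding r_annih_def by auto
  next
    fix \<rho> assume rc: "right_congruence S f \<rho>" and "Y \<subseteq> \<rho>"
    then have "X \<subseteq> \<rho> \<inter> T \<times> T" using X(2) unfolding Y_def by auto
    then have "r_annih T f a \<subseteq> \<rho>"
      using right_congruence_gen_least[OF right_congruence_restrict[OF rc sub]] X(3) by blast
    then show "r_annih S f a \<subseteq> \<rho>"
    proof (rule r_annih_subset_by_representatives[OF rc TS _ c_S c_annih c_T])
      show "(u, c u) \<in> \<rho>" if "u \<in> S - T" for u
        using that \<open>Y \<subseteq> \<rho>\<close> unfolding Y_def by auto
      show "r_annih S f a \<inter> (S - T) \<times> (S - T) \<subseteq> \<rho>"
        using \<open>Y \<subseteq> \<rho>\<close> unfolding Y_def by auto
    qed
  qed
  ultimately show ?thesis unfolding fg_right_congruence_def by blast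
qed

theorem mainTheorem11:
  fixes S T :: "'a set" and f :: "'a \<Rightarrow> 'a \<Rightarrow> 'a"
  assumes "semigroup_on S f"
    and "subsemigroup T S f"
    and "finite (S - T)"
    and "finitely_right_equated T f"
  shows "finitely_right_equated S f \<longleftrightarrow>
           (\<forall>a \<in> S - T. fg_right_congruence S f (r_annih S f a))"
  using fg_r_annih_of_subsemigroup[OF assms(1-3)] assms(4)
  unfolding finitely_right_equated_def by blast

end
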